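(* Let $\mathrm{k}\ge1$ and consider real coefficients $a_j$ ($0\le j\le\mathrm{k}-1$), $b_j$ ($0\le j\le\mathrm{k}$), $c_j$ ($0\le j\le\mathrm{k}-1$) with $b_0>0$. Then no such $\mathrm{k}$-step implicit-explicit multistep method has consistency order $\mathrm{k}+1$; that is, the order conditions $$\sum_{j=0}^{\mathrm{k}-1}a_j=1,\qquad \sum_{j=0}^{\mathrm{k}-1}a_j\,\partial_\tau t_{n-j}^{\ell}=\ell\sum_{j=0}^{\mathrm{k}}b_j\,t_{n-j}^{\ell-1}=\ell\sum_{j=0}^{\mathrm{k}-1}c_j\,t_{n-j-1}^{\ell-1}\quad\text{for }1\le\ell\le\mathrm{k}+1,$$ cannot all hold (for $n\ge\mathrm{k}$ on a uniform mesh $t_j=j\tau$).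
   Context: The method in question is $\sum_{j=0}^{\mathrm{k}-1}a_j\partial_\tau u^{n-j}+\varpi\sum_{j=0}^{\mathrm{k}}b_j\mathcal{L}u^{n-j}=\sum_{j=0}^{\mathrm{k}-1}c_j\mathcal{F}(u^{n-j-1})$, where $\partial_\tau v^m=(v^m-v^{m-1})/\tau$; in the order conditions $\partial_\tau t^\ell_m=(t_m^\ell-t_{m-1}^\ell)/\tau$. The implicit part means $b_0>0$. *)

theory Defs
  imports Complex_Main
begin

definition mesh :: "real \<Rightarrow> nat \<Rightarrow> real" where
  "mesh \<tau> m = real m * \<tau>"

end

theory Submission
  imports Defs "HOL-Computational_Algebra.Polynomial"
begin

text \<open>Dividing the order condition for \<open>l = m + 1\<close> by \<open>l\<close>, the implicit weights \<open>b j\<close> at the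
  nodes \<open>t (n - j)\<close>, \<open>j \<le> k\<close>, and the explicit weights \<open>c j\<close> at the nodes \<open>t (n - j - 1)\<close>,
  \<open>j < k\<close>, have equal moments of every order \<open>m \<le> k\<close>, hence integrate every polynomial of
  degree \<open>\<le> k\<close> alike. The polynomial \<open>\<Prod>i = 1..k. X - t (n - i)\<close> vanishes at all explicit
  nodes and at every implicit node except \<open>t n\<close>, which forces \<open>b 0 = 0\<close>.\<close>

lemma poly_eq_sum_coeff_atMost:
  fixes p :: "'a::comm_semiring_1 poly"
  assumes "degree p \<le> n"
  shows "poly p x = (\<Sum>i\<le>n. coeff p i * x ^ i)"
proof -
  have "poly p x = poly (\<Sum>i\<le>n. monom (coeff p i) i) x"
    by (simp only: poly_as_sum_of_monoms'[OF assms])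
  then show ?thesis
    by (simp add: poly_sum poly_monom)
qed

lemma sum_mult_poly_eq_if_moments_eq:
  fixes u v :: "'i \<Rightarrow> 'a::comm_semiring_1" and y z :: "'i \<Rightarrow> 'a"
  assumes moments: "\<And>m. m \<le> n \<Longrightarrow> (\<Sum>j\<in>A. u j * y j ^ m) = (\<Sum>j\<in>B. v j * z j ^ m)"
    and "degree p \<le> n"
  shows "(\<Sum>j\<in>A. u j * poly p (y j)) = (\<Sum>j\<in>B. v j * poly p (z j))"
proof -
  have expand: "(\<Sum>j\<in>I. w j * poly p (t j)) = (\<Sum>i\<le>n. coeff p i * (\<Sum>j\<in>I. w j * t j ^ i))"
    for I and w t :: "'i \<Rightarrow> 'a"
    by (simp add: poly_eq_sum_coeff_atMost[OF \<open>degree p \<le> n\<close>] sum_distrib_left mult_ac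
        sum.swap[where A = I])
  show ?thesis
    unfolding expand by (simp add: moments)
qed

lemma moments_eq_imp_first_weight_eq_0:
  fixes x :: "nat \<Rightarrow> 'a::idom"
  assumes moments: "\<And>m. m \<le> k \<Longrightarrow> (\<Sum>j\<le>k. b j * x j ^ m) = (\<Sum>j<k. c j * x (Suc j) ^ m)"
    and distinct: "\<And>i. i \<in> {1..k} \<Longrightarrow> x i \<noteq> x 0"
  shows "b 0 = 0"
proof -
  define p where "p = (\<Prod>i\<in>{1..k}. [:- x i, 1:])"
  have "degree p \<le> (\<Sum>i\<in>{1..k}. degree [:- x i, 1:])"
    unfolding p_def using degree_prod_sum_le[of "{1..k}" "\<lambda>i. [:- x i, 1:]"] by (simp add: o_def)
  then have "degree p \<le> k"
    by simp
  then have "(\<Sum>j\<le>k. b j * poly p (x j)) = (\<Sum>j<k. c j * poly p (x (Suc j)))"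
    by (intro sum_mult_poly_eq_if_moments_eq[where z = "\<lambda>j. x (Suc j)"]) (simp_all add: moments)
  moreover have root: "poly p (x i) = 0" if "i \<in> {1..k}" for i
    unfolding p_def poly_prod using that by (intro prod_zero) auto
  moreover have "(\<Sum>j\<le>k. b j * poly p (x j)) = b 0 * poly p (x 0)"
    by (subst sum.mono_neutral_right[of "{..k}" "{0}"]) (auto simp: root)
  moreover have "poly p (x 0) \<noteq> 0"
    unfolding p_def poly_prod using distinct by (force simp: prod_zero_iff)
  ultimately show ?thesis
    by (simp add: root)
qed

lemma mesh_eq_iff:
  assumes "\<tau> \<noteq> 0"
  shows "mesh \<tau> m = mesh \<tau> m' \<longleftrightarrow> m = m'"
  using assms by (simp add: mesh_def)

theorem proposition3p2:
  fixes k n :: nat and \<tau> :: real and a b c :: "nat \<Rightarrow> real"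
  assumes "k \<ge> 1" and "b 0 > 0" and "n \<ge> k" and "\<tau> > 0"
  shows "\<not> ((\<Sum>j<k. a j) = 1 \<and>
           (\<forall>l\<in>{1..k+1}.
              (\<Sum>j<k. a j * ((mesh \<tau> (n-j))^l - (mesh \<tau> (n-j-1))^l) / \<tau>)
                = real l * (\<Sum>j\<le>k. b j * (mesh \<tau> (n-j))^(l-1))
            \<and> real l * (\<Sum>j\<le>k. b j * (mesh \<tau> (n-j))^(l-1))
                = real l * (\<Sum>j<k. c j * (mesh \<tau> (n-j-1))^(l-1))))"
proof
  assume order_conditions: "(\<Sum>j<k. a j) = 1 \<and>
           (\<forall>l\<in>{1..k+1}.
              (\<Sum>j<k. a j * ((mesh \<tau> (n-j))^l - (mesh \<tau> (n-j-1))^l) / \<tau>)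
                = real l * (\<Sum>j\<le>k. b j * (mesh \<tau> (n-j))^(l-1))
            \<and> real l * (\<Sum>j\<le>k. b j * (mesh \<tau> (n-j))^(l-1))
                = real l * (\<Sum>j<k. c j * (mesh \<tau> (n-j-1))^(l-1)))"
  define x where "x j = mesh \<tau> (n - j)" for j
  have "(\<Sum>j\<le>k. b j * x j ^ m) = (\<Sum>j<k. c j * x (Suc j) ^ m)" if "m \<le> k" for m
    using order_conditions that by (auto simp: x_def dest!: bspec[of _ _ "m + 1"])
  moreover have "x i \<noteq> x 0" if "i \<in> {1..k}" for i
    using that \<open>n \<ge> k\<close> \<open>\<tau> > 0\<close> by (auto simp: x_def mesh_eq_iff)
  ultimately have "b 0 = 0"
    by (rule moments_eq_imp_first_weight_eq_0)
  with \<open>b 0 > 0\<close> show False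
    by simp
qed

end
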